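(* Let $n,d\ge1$, $\omega\ge0$, $\alpha\in(0,1]$, $K_\omega,K_\alpha\in(0,d]$, and $0<\mu\le L\le L_{\max}$. For $r\in[0,1]$ put $K^r=(1-r)K_\omega+rK_\alpha$, $\mu^r_{\omega,\alpha}=rd/K^r$, $$\mathfrak m^r_{\mathrm{EF21\text{-}P+DIANA}}=K^r\Big(\frac{L}{\alpha\mu}+\frac{\omega L_{\max}}{n\mu}+\omega\Big)+d,$$ $$\mathfrak m^r_{\mathrm{realistic}}=K^r\Big(\sqrt{\tfrac{L\max\{\omega+1,\mu^r_{\omega,\alpha}\}}{\alpha\mu}}+\sqrt{\tfrac{L_{\max}\omega\max\{\omega+1,\mu^r_{\omega,\alpha}\}}{n\mu}}+\tfrac1\alpha+\omega+\mu^r_{\omega,\alpha}\Big)+d.$$ Then for all $r\in[0,1]$, $\mathfrak m^r_{\mathrm{realistic}}=\widetilde{\mathcal O}\big(\mathfrak m^r_{\mathrm{EF21\text{-}P+DIANA}}\big)$, i.e. $\mathfrak m^r_{\mathrm{realistic}}\le C\,\mathfrak m^r_{\mathrm{EF21\text{-}P+DIANA}}$ for a universal constant $C$ (up to logarithmic factors).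
   Context: $\mathfrak m^r_{\mathrm{EF21\text{-}P+DIANA}}$ is (up to logarithmic factors) the total communication complexity of the previous method EF21-P + DIANA, and $\mathfrak m^r_{\mathrm{realistic}}$ is (up to logarithmic factors) that of the new method 2Direction with its hyper-parameters chosen without knowledge of $L_{\max}/L$, for minimizing $f=\frac1n\sum_i f_i$ on $\mathbb R^d$ with $n$ workers, each $f_i$ being $L_i$-smooth and convex, $L_{\max}=\max_iL_i$, $f$ being $L$-smooth and $\mu$-strongly convex. $\omega$ and $K_\omega$ are the variance parameter and expected density of the worker (unbiased) compressors, $\alpha$ and $K_\alpha$ the contraction parameter and expected density of the server (biased) compressor, and the total communication complexity is $(1-r)\cdot(\text{worker-to-server cost})+r\cdot(\text{server-to-worker cost})$. *)

theory Defs
  imports Complex_Main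
begin

definition K_r :: "real \<Rightarrow> real \<Rightarrow> real \<Rightarrow> real" where
  "K_r K\<omega> K\<alpha> r = (1 - r) * K\<omega> + r * K\<alpha>"

definition mu_r :: "nat \<Rightarrow> real \<Rightarrow> real \<Rightarrow> real \<Rightarrow> real" where
  "mu_r d K\<omega> K\<alpha> r = r * real d / K_r K\<omega> K\<alpha> r"

definition m_EF21P_DIANA ::
  "nat \<Rightarrow> nat \<Rightarrow> real \<Rightarrow> real \<Rightarrow> real \<Rightarrow> real \<Rightarrow> real \<Rightarrow> real \<Rightarrow> real \<Rightarrow> real \<Rightarrow> real" where
  "m_EF21P_DIANA n d \<omega> \<alpha> K\<omega> K\<alpha> \<mu> L Lmax r =
     K_r K\<omega> K\<alpha> r * (L / (\<alpha> * \<mu>) + \<omega> * Lmax / (real n * \<mu>) + \<omega>) + real d"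

definition m_realistic ::
  "nat \<Rightarrow> nat \<Rightarrow> real \<Rightarrow> real \<Rightarrow> real \<Rightarrow> real \<Rightarrow> real \<Rightarrow> real \<Rightarrow> real \<Rightarrow> real \<Rightarrow> real" where
  "m_realistic n d \<omega> \<alpha> K\<omega> K\<alpha> \<mu> L Lmax r =
     (let M = max (\<omega> + 1) (mu_r d K\<omega> K\<alpha> r) in
      K_r K\<omega> K\<alpha> r *
        (sqrt (L * M / (\<alpha> * \<mu>)) + sqrt (Lmax * \<omega> * M / (real n * \<mu>))
         + 1 / \<alpha> + \<omega> + mu_r d K\<omega> K\<alpha> r) + real d)"

end

theory Submission
  imports Defs
begin

(* Write K for K^r, A = L/(alpha mu), B = omega Lmax/(n mu) and M = max (omega + 1) mu^r.
   By AM-GM each square root of the realistic bound is at most half the sum of its two factors,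
   so everything reduces to bounding K M. Since K mu^r = r d <= d, K M <= K (omega + 1) + d,
   and K <= K A because A >= 1/alpha >= 1. Collecting terms gives the constant 3. *)

lemma K_r_pos:
  assumes "0 < K\<omega>" "0 < K\<alpha>" "0 \<le> r" "r \<le> 1"
  shows "0 < K_r K\<omega> K\<alpha> r"
proof (cases "r = 0")
  case False
  then have "0 < r * K\<alpha>" using assms by simp
  moreover have "0 \<le> (1 - r) * K\<omega>" using assms by simp
  ultimately show ?thesis unfolding K_r_def by linarith
qed (use assms in \<open>simp add: K_r_def\<close>)

lemma K_r_mult_mu_r:
  assumes "K_r K\<omega> K\<alpha> r \<noteq> 0"
  shows "K_r K\<omega> K\<alpha> r * mu_r d K\<omega> K\<alpha> r = r * real d"
  using assms by (simp add: mu_r_def)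

lemma mu_r_nonneg:
  assumes "0 < K\<omega>" "0 < K\<alpha>" "0 \<le> r" "r \<le> 1"
  shows "0 \<le> mu_r d K\<omega> K\<alpha> r"
  using K_r_pos[OF assms] assms by (simp add: mu_r_def)

lemma scaled_sqrt_max_sum_le:
  fixes K a A B \<omega> m D :: real
  defines "M \<equiv> max (\<omega> + 1) m"
  assumes "0 < K" "1 \<le> a" "a \<le> A" "0 \<le> B" "0 \<le> \<omega>" "0 \<le> m" "K * m \<le> D"
  shows "K * (sqrt (A * M) + sqrt (B * M) + a + \<omega> + m) + D \<le> 3 * (K * (A + B + \<omega>) + D)"
proof -
  have "0 \<le> M" unfolding M_def using assms by simp
  then have "sqrt (A * M) \<le> (A + M) / 2" "sqrt (B * M) \<le> (B + M) / 2"
    using arith_geo_mean_sqrt assms by simp_all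
  then have "sqrt (A * M) + sqrt (B * M) + a + \<omega> + m \<le> (3 * A / 2 + B / 2 + \<omega>) + M + m"
    using \<open>a \<le> A\<close> by argo
  with \<open>0 < K\<close> have "K * (sqrt (A * M) + sqrt (B * M) + a + \<omega> + m) + D
      \<le> K * (3 * A / 2 + B / 2 + \<omega>) + K * M + K * m + D"
    by (metis add_right_mono distrib_left less_le mult_left_mono)
  also have "K * M \<le> K * (\<omega> + 1) + D"
  proof -
    have "M \<le> (\<omega> + 1) + m" unfolding M_def using assms by simp
    then have "K * M \<le> K * (\<omega> + 1) + K * m"
      using \<open>0 < K\<close> by (simp add: mult_left_mono flip: distrib_left)
    then show ?thesis using assms by linarith
  qed
  also have "K * (3 * A / 2 + B / 2 + \<omega>) + (K * (\<omega> + 1) + D) + K * m + D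
      \<le> K * (5 * A / 2 + B / 2 + 2 * \<omega>) + 3 * D"
  proof -
    have "K \<le> K * A" using assms by simp
    then show ?thesis using \<open>K * m \<le> D\<close> by (simp add: algebra_simps)
  qed
  also have "\<dots> \<le> 3 * (K * (A + B + \<omega>) + D)"
  proof -
    have "0 \<le> K * A" "0 \<le> K * B" "0 \<le> K * \<omega>" using assms by simp_all
    then show ?thesis by (simp add: distrib_left)
  qed
  finally show ?thesis by simp
qed

theorem theorem4:
  shows "\<exists>C::real. C > 0 \<and>
    (\<forall>(n::nat) (d::nat) (\<omega>::real) (\<alpha>::real) (K\<omega>::real) (K\<alpha>::real)
       (\<mu>::real) (L::real) (Lmax::real) (r::real).
       n \<ge> 1 \<and> d \<ge> 1 \<and> \<omega> \<ge> 0 \<and> 0 < \<alpha> \<and> \<alpha> \<le> 1 \<and>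
       0 < K\<omega> \<and> K\<omega> \<le> real d \<and> 0 < K\<alpha> \<and> K\<alpha> \<le> real d \<and>
       0 < \<mu> \<and> \<mu> \<le> L \<and> L \<le> Lmax \<and> 0 \<le> r \<and> r \<le> 1 \<longrightarrow>
       m_realistic n d \<omega> \<alpha> K\<omega> K\<alpha> \<mu> L Lmax r
         \<le> C * m_EF21P_DIANA n d \<omega> \<alpha> K\<omega> K\<alpha> \<mu> L Lmax r)"
proof (intro exI[of _ 3] conjI allI impI)
  fix n d :: nat and \<omega> \<alpha> K\<omega> K\<alpha> \<mu> L Lmax r :: real
  assume hyps: "n \<ge> 1 \<and> d \<ge> 1 \<and> \<omega> \<ge> 0 \<and> 0 < \<alpha> \<and> \<alpha> \<le> 1 \<and>
       0 < K\<omega> \<and> K\<omega> \<le> real d \<and> 0 < K\<alpha> \<and> K\<alpha> \<le> real d \<and>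
       0 < \<mu> \<and> \<mu> \<le> L \<and> L \<le> Lmax \<and> 0 \<le> r \<and> r \<le> 1"
  define K where "K = K_r K\<omega> K\<alpha> r"
  define m where "m = mu_r d K\<omega> K\<alpha> r"
  have "0 < K" unfolding K_def using K_r_pos hyps by blast
  have "K * m \<le> real d"
    using K_r_mult_mu_r[of K\<omega> K\<alpha> r d] \<open>0 < K\<close> hyps
    by (simp add: K_def m_def mult_left_le_one_le)
  moreover have "1 \<le> 1 / \<alpha>" "1 / \<alpha> \<le> L / (\<alpha> * \<mu>)"
    using hyps by (simp_all add: divide_simps)
  moreover have "0 \<le> m" "0 \<le> \<omega> * Lmax / (real n * \<mu>)"
    using mu_r_nonneg hyps by (auto simp: m_def)
  ultimately have "K * (sqrt (L / (\<alpha> * \<mu>) * max (\<omega> + 1) m)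
        + sqrt (\<omega> * Lmax / (real n * \<mu>) * max (\<omega> + 1) m) + 1 / \<alpha> + \<omega> + m) + real d
      \<le> 3 * (K * (L / (\<alpha> * \<mu>) + \<omega> * Lmax / (real n * \<mu>) + \<omega>) + real d)"
    using scaled_sqrt_max_sum_le \<open>0 < K\<close> hyps by blast
  then show "m_realistic n d \<omega> \<alpha> K\<omega> K\<alpha> \<mu> L Lmax r
      \<le> 3 * m_EF21P_DIANA n d \<omega> \<alpha> K\<omega> K\<alpha> \<mu> L Lmax r"
    by (simp add: m_realistic_def m_EF21P_DIANA_def Let_def K_def m_def mult.commute mult.left_commute)
qed simp

end
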